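(* Let $\Omega\subset\mathbb{R}^d$, $T_{\text{final}}>0$, and let $s=(s_1,\dots,s_{d_s})^\top$, $s_j:\Omega\times[0,T_{\text{final}})\to\mathcal{S}_j\subset\mathbb{R}$, be a (sufficiently smooth) solution of the nonlinear PDE $\partial s/\partial t=f(s)$, where $f=(f_1,\dots,f_{d_s})^\top$ is a differentiable nonlinear function (possibly involving spatial derivatives of $s$); write $\mathcal{S}=\mathcal{S}_1\times\cdots\times\mathcal{S}_{d_s}$. Let $\mathcal{T}:\mathcal{S}\to\mathcal{W}\subset\mathbb{R}^{d_w}$ be a quadratic lifting with Jacobian $\mathcal{J}$ and $\mathcal{T}^\dagger$ a reverse lifting map (definitions in context), so that $w=\mathcal{T}(s)$ satisfies $\partial w/\partial t=a(w)+h(w)$. Let $x_1,\dots,x_n\in\Omega$ be grid points, $\bar{\mathbf{s}}(t)\in\mathbb{R}^{nd_s}$ the vector with entries $\bar{\mathbf{s}}_{(j-1)n+l}(t)=s_j(x_l,t)$, and $\bar{\mathbf{w}}(t)=\mathbf{T}(\bar{\mathbf{s}}(t))$. Suppose that $\frac{d\mathbf{s}}{dt}=\mathbf{f}(\mathbf{s})$ (with $\mathbf{f}$ Lipschitz) is a consistent order-$p$ discretization of $\partial s/\partial t=f(s)$ and that $\frac{d\mathbf{w}}{dt}=\mathbf{A}\mathbf{w}+\mathbf{H}(\mathbf{w}\otimes\mathbf{w})$, with $\mathbf{A}\in\mathbb{R}^{nd_w\times nd_w}$, $\mathbf{H}\in\mathbb{R}^{nd_w\times n^2d_w^2}$, is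 a consistent order-$p$ discretization of $\partial w/\partial t=a(w)+h(w)$ (definitions in context). Then there is a constant $C$ independent of $n$ such that for all $t$, $$\left\|\mathbf{A}\bar{\mathbf{w}}+\mathbf{H}(\bar{\mathbf{w}}\otimes\bar{\mathbf{w}})-\mathbf{J}(\mathbf{T}^\dagger(\bar{\mathbf{w}}))\,\mathbf{f}(\mathbf{T}^\dagger(\bar{\mathbf{w}}))\right\|_2\le C\, n^{\frac12-p}.$$
   Context: Quadratic lifting: a map $\mathcal{T}:\mathcal{S}\to\mathcal{W}\subset\mathbb{R}^{d_w}$, $d_w\ge d_s$, differentiable in $s$ with Jacobian $\mathcal{J}(s)$ satisfying $\sup_{s\in\mathcal{S}}\|\mathcal{J}(s)\|\le c$ for some $c>0$, such that the lifted state $w(x,t)=\mathcal{T}(s(x,t))$ satisfies $\partial w/\partial t=a(w)+h(w)$ with $a=(a_1,\dots,a_{d_w})^\top$, $h=(h_1,\dots,h_{d_w})^\top$, each $a_j$ linear and each $h_j$ quadratic (these operators may involve spatial derivatives). Reverse lifting map: a map $\mathcal{T}^\dagger:\mathcal{W}\to\mathcal{S}$, differentiable with bounded derivative on $\mathcal{W}$, with $\mathcal{T}^\dagger(\mathcal{T}(s))=s$ for all $s\in\mathcal{S}$. Discrete maps: $\mathbf{T}:\mathbb{R}^{nd_s}\to\mathbb{R}^{nd_w}$ applies $\mathcal{T}$ node-wise, i.e. its $((j-1)n+l)$-th output is $\mathcal{T}_j$ applied to the $d_s$ state values at node $x_l$; $\mathbf{J}(\mathbf{s})\in\mathbb{R}^{nd_w\times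 nd_s}$ is the Jacobian of $\mathbf{T}$; $\mathbf{T}^\dagger$ applies $\mathcal{T}^\dagger$ node-wise. The semi-discrete model $\frac{d\mathbf{s}}{dt}=\mathbf{f}(\mathbf{s})$, $\mathbf{f}:\mathcal{S}^n\to\mathcal{S}^n$ Lipschitz, is a consistent order-$p$ discretization if there is $c_s>0$ with $|\mathbf{f}_{(j-1)n+l}(\bar{\mathbf{s}}(t))-f_j(s(x,t))|_{x=x_l}|\le c_s n^{-p}$ for all $t$, $j=1,\dots,d_s$, $l=1,\dots,n$. The lifted discrete model is a consistent order-$p$ discretization if there is $c_w>0$ with $|\mathbf{A}_{(j-1)n+l,:}\bar{\mathbf{w}}+\mathbf{H}_{(j-1)n+l,:}(\bar{\mathbf{w}}\otimes\bar{\mathbf{w}})-(a_j(w)+h_j(w))|_{x=x_l}|\le c_w n^{-p}$ for all $t$, $j=1,\dots,d_w$, $l=1,\dots,n$, where $\mathbf{M}_{i,:}$ denotes the $i$-th row. For $\mathbf{b}=(b_1,\dots,b_m)^\top$, $\mathbf{b}\otimes\mathbf{b}=(b_1^2,b_1b_2,\dots,b_1b_m,b_2b_1,\dots,b_m^2)^\top\in\mathbb{R}^{m^2}$. *)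

theory Defs
  imports "HOL-Analysis.Analysis"
begin

definition prod_set :: "('s::finite \<Rightarrow> real set) \<Rightarrow> (real^'s) set" where
  "prod_set Sj = {v. \<forall>j. v $ j \<in> Sj j}"

definition linear_op :: "(('x \<Rightarrow> 'v::real_vector) \<Rightarrow> 'x \<Rightarrow> 'v) \<Rightarrow> bool" where
  "linear_op a \<longleftrightarrow>
     (\<forall>u v. a (\<lambda>x. u x + v x) = (\<lambda>x. a u x + a v x)) \<and>
     (\<forall>c u. a (\<lambda>x. c *\<^sub>R u x) = (\<lambda>x. c *\<^sub>R a u x))"

definition quadratic_op :: "(('x \<Rightarrow> 'v::real_vector) \<Rightarrow> 'x \<Rightarrow> 'v) \<Rightarrow> bool" where
  "quadratic_op h \<longleftrightarrow>
     (\<forall>c u. h (\<lambda>x. c *\<^sub>R u x) = (\<lambda>x. (c^2) *\<^sub>R h u x)) \<and>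
     (let B = (\<lambda>u v x. h (\<lambda>y. u y + v y) x - h u x - h v x) in
       (\<forall>u u' v. B (\<lambda>y. u y + u' y) v = (\<lambda>x. B u v x + B u' v x)) \<and>
       (\<forall>c u v. B (\<lambda>y. c *\<^sub>R u y) v = (\<lambda>x. c *\<^sub>R B u v x)))"

definition quadratic_lifting ::
  "(real^'d) set \<Rightarrow> real \<Rightarrow> (real^'d \<Rightarrow> real \<Rightarrow> real^'s::finite) \<Rightarrow> (real^'s) set \<Rightarrow> (real^'w::finite) set
   \<Rightarrow> (real^'s \<Rightarrow> real^'w) \<Rightarrow> (real^'s \<Rightarrow> real^'s^'w) \<Rightarrow> real
   \<Rightarrow> ((real^'d \<Rightarrow> real^'w) \<Rightarrow> real^'d \<Rightarrow> real^'w)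
   \<Rightarrow> ((real^'d \<Rightarrow> real^'w) \<Rightarrow> real^'d \<Rightarrow> real^'w) \<Rightarrow> bool" where
  "quadratic_lifting \<Omega> Tf s S W T J c a h \<longleftrightarrow>
     T ` S \<subseteq> W \<and>
     (\<forall>v\<in>S. (T has_derivative (\<lambda>z. J v *v z)) (at v within S)) \<and>
     c > 0 \<and> (\<forall>v\<in>S. onorm (\<lambda>z. J v *v z) \<le> c) \<and>
     linear_op a \<and> quadratic_op h \<and>
     (\<forall>x\<in>\<Omega>. \<forall>t\<in>{0..<Tf}.
        ((\<lambda>\<tau>. T (s x \<tau>)) has_vector_derivative
           (a (\<lambda>y. T (s y t)) x + h (\<lambda>y. T (s y t)) x)) (at t within {0..<Tf}))"

definition reverse_lifting ::
  "(real^'s::finite) set \<Rightarrow> (real^'w::finite) set \<Rightarrow> (real^'s \<Rightarrow> real^'w) \<Rightarrow> (real^'w \<Rightarrow> real^'s) \<Rightarrow> bool" where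
  "reverse_lifting S W T Td \<longleftrightarrow>
     (\<forall>v\<in>S. Td (T v) = v) \<and>
     (\<exists>B. \<forall>w\<in>W. \<exists>D. (Td has_derivative D) (at w within W) \<and> onorm D \<le> B)"

text \<open>A discrete vector in R^(n d) is represented as a function on (component, node) pairs
  ('c \<times> nat), where the pair (j,l) stands for the index (j-1)n+l; only nodes l < n matter.\<close>

definition norm2 :: "nat \<Rightarrow> ('c::finite \<times> nat \<Rightarrow> real) \<Rightarrow> real" where
  "norm2 n v = sqrt (\<Sum>i\<in>UNIV \<times> {..<n}. (v i)^2)"

definition mat_vec :: "nat \<Rightarrow> ('r \<Rightarrow> ('c::finite \<times> nat) \<Rightarrow> real) \<Rightarrow> ('c \<times> nat \<Rightarrow> real) \<Rightarrow> 'r \<Rightarrow> real" where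
  "mat_vec n M v = (\<lambda>i. \<Sum>q\<in>UNIV \<times> {..<n}. M i q * v q)"

definition kron :: "('i \<Rightarrow> real) \<Rightarrow> ('i \<times> 'i \<Rightarrow> real)" where
  "kron b = (\<lambda>(q, q'). b q * b q')"

definition mat_vec2 :: "nat \<Rightarrow> ('r \<Rightarrow> (('c::finite \<times> nat) \<times> ('c \<times> nat)) \<Rightarrow> real)
                        \<Rightarrow> (('c \<times> nat) \<times> ('c \<times> nat) \<Rightarrow> real) \<Rightarrow> 'r \<Rightarrow> real" where
  "mat_vec2 n H z = (\<lambda>i. \<Sum>qq\<in>(UNIV \<times> {..<n}) \<times> (UNIV \<times> {..<n}). H i qq * z qq)"

definition disc_set :: "nat \<Rightarrow> ('s \<Rightarrow> real set) \<Rightarrow> ('s \<times> nat \<Rightarrow> real) set" where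
  "disc_set n Sj = {u. \<forall>j l. (l < n \<longrightarrow> u (j, l) \<in> Sj j) \<and> (n \<le> l \<longrightarrow> u (j, l) = 0)}"

definition sample :: "nat \<Rightarrow> (nat \<Rightarrow> real^'s::finite) \<Rightarrow> ('s \<times> nat \<Rightarrow> real)" where
  "sample n g = (\<lambda>(j, l). if l < n then g l $ j else 0)"

definition nodewise :: "nat \<Rightarrow> (real^'a::finite \<Rightarrow> real^'b::finite) \<Rightarrow> ('a \<times> nat \<Rightarrow> real) \<Rightarrow> ('b \<times> nat \<Rightarrow> real)" where
  "nodewise n F u = (\<lambda>(j, l). if l < n then F (\<chi> k. u (k, l)) $ j else 0)"

definition jac_disc :: "nat \<Rightarrow> (real^'s::finite \<Rightarrow> real^'s^'w::finite) \<Rightarrow> ('s \<times> nat \<Rightarrow> real)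
                        \<Rightarrow> ('w \<times> nat) \<Rightarrow> ('s \<times> nat) \<Rightarrow> real" where
  "jac_disc n J u = (\<lambda>(j, l) (k, l'). if l < n \<and> l' = l then J (\<chi> i. u (i, l)) $ j $ k else 0)"

definition lipschitz_disc :: "nat \<Rightarrow> ('s::finite \<Rightarrow> real set) \<Rightarrow> (('s \<times> nat \<Rightarrow> real) \<Rightarrow> ('s \<times> nat \<Rightarrow> real)) \<Rightarrow> bool" where
  "lipschitz_disc n Sj F \<longleftrightarrow> (\<exists>L. \<forall>u\<in>disc_set n Sj. \<forall>v\<in>disc_set n Sj.
      norm2 n (\<lambda>i. F u i - F v i) \<le> L * norm2 n (\<lambda>i. u i - v i))"

end

theory Submission
  imports Defs
begin

text \<open>Along the exact solution the chain rule gives \<open>J(s) f(s) = a(w) + h(w)\<close> pointwise, so the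
  residual at node \<open>x\<^sub>l\<close> splits into the consistency error of the lifted model and \<open>J(s)\<close> applied
  to the consistency error of the original model, since \<open>T\<^sup>\<dagger>\<close> recovers the sampled solution
  exactly. Both errors are \<open>O(n\<^sup>-\<^sup>p)\<close> per entry and \<open>J\<close> is bounded, so summing the squares of the
  \<open>n d\<^sub>w\<close> entries gives \<open>O(n\<^sup>1\<^sup>/\<^sup>2\<^sup>-\<^sup>p)\<close>.\<close>

lemma has_vector_derivative_chain_unique:
  assumes sigma: "(\<sigma> has_vector_derivative v) (at t within I)"
    and range: "\<sigma> ` I \<subseteq> S"
    and F: "(F has_derivative L) (at (\<sigma> t) within S)"
    and comp: "((\<lambda>\<tau>. F (\<sigma> \<tau>)) has_vector_derivative u) (at t within I)"
    and nontrivial: "at t within I \<noteq> bot"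
  shows "L v = u"
proof -
  have "(F has_derivative L) (at (\<sigma> t) within \<sigma> ` I)"
    using F range by (rule has_derivative_subset)
  from vector_derivative_diff_chain_within[OF sigma this]
  have "((\<lambda>\<tau>. F (\<sigma> \<tau>)) has_vector_derivative L v) (at t within I)"
    by (simp add: o_def)
  then show ?thesis
    using comp nontrivial vector_derivative_unique_within by blast
qed

lemma quadratic_lifting_jacobian_rhs:
  assumes lift: "quadratic_lifting \<Omega> Tf s S W T J c a h"
    and Tf_pos: "Tf > 0" and x: "x \<in> \<Omega>" and t: "t \<in> {0..<Tf}"
    and range: "\<forall>\<tau>\<in>{0..<Tf}. s x \<tau> \<in> S"
    and pde: "((\<lambda>\<tau>. s x \<tau>) has_vector_derivative f (\<lambda>y. s y t) x) (at t within {0..<Tf})"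
  shows "J (s x t) *v f (\<lambda>y. s y t) x = a (\<lambda>y. T (s y t)) x + h (\<lambda>y. T (s y t)) x"
proof (rule has_vector_derivative_chain_unique[OF pde])
  show "(\<lambda>\<tau>. s x \<tau>) ` {0..<Tf} \<subseteq> S"
    using range by auto
  show "(T has_derivative (\<lambda>z. J (s x t) *v z)) (at (s x t) within S)"
    using lift range t unfolding quadratic_lifting_def by blast
  show "((\<lambda>\<tau>. T (s x \<tau>)) has_vector_derivative
          a (\<lambda>y. T (s y t)) x + h (\<lambda>y. T (s y t)) x) (at t within {0..<Tf})"
    using lift x t unfolding quadratic_lifting_def by blast
  show "at t within {0..<Tf} \<noteq> bot"
    using t Tf_pos by (simp add: trivial_limit_within)
qed

lemma vec_sample_node:
  assumes "l < n"
  shows "(\<chi> k. sample n g (k, l)) = g l"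
  using assms by (simp add: sample_def vec_eq_iff)

lemma nodewise_sample: "nodewise n F (sample n g) = sample n (\<lambda>l. F (g l))"
  by (simp add: fun_eq_iff nodewise_def sample_def vec_eq_iff)

lemma sample_cong: "(\<And>l. l < n \<Longrightarrow> g l = g' l) \<Longrightarrow> sample n g = sample n g'"
  by (simp add: fun_eq_iff sample_def)

lemma nodewise_left_inverse_sample:
  assumes "\<forall>v\<in>S. G (F v) = v" and "\<And>l. l < n \<Longrightarrow> g l \<in> S"
  shows "nodewise n G (nodewise n F (sample n g)) = sample n g"
proof -
  have "sample n (\<lambda>l. G (F (g l))) = sample n g"
    using assms by (intro sample_cong) auto
  then show ?thesis
    by (simp add: nodewise_sample)
qed

lemma mat_vec_jac_disc:
  assumes "l < n"
  shows "mat_vec n (jac_disc n J u) v (j, l) = (J (\<chi> i. u (i, l)) *v (\<chi> k. v (k, l))) $ j"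
proof -
  have "mat_vec n (jac_disc n J u) v (j, l)
      = (\<Sum>k\<in>UNIV. \<Sum>l'<n. if l' = l then J (\<chi> i. u (i, l)) $ j $ k * v (k, l') else 0)"
    unfolding mat_vec_def jac_disc_def sum.cartesian_product
    by (rule sum.cong) (auto simp: assms)
  also have "\<dots> = (\<Sum>k\<in>UNIV. J (\<chi> i. u (i, l)) $ j $ k * v (k, l))"
    using assms by simp
  finally show ?thesis
    by (simp add: matrix_vector_mult_def)
qed

lemma matrix_vector_mult_component_le:
  fixes M :: "real^'n::finite^'m::finite"
  assumes "onorm (\<lambda>z. M *v z) \<le> c" and "\<And>k. \<bar>e $ k\<bar> \<le> B"
  shows "\<bar>(M *v e) $ j\<bar> \<le> c * real CARD('n) * B"
proof -
  have "0 \<le> c"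
    using assms(1) onorm_pos_le[OF matrix_vector_mul_bounded_linear] by (rule order_trans[rotated])
  have "norm e \<le> (\<Sum>k\<in>UNIV. \<bar>e $ k\<bar>)"
    by (rule norm_le_l1_cart)
  also have "\<dots> \<le> real CARD('n) * B"
    using sum_mono[of UNIV "\<lambda>k. \<bar>e $ k\<bar>" "\<lambda>_. B"] assms(2) by simp
  finally have e: "norm e \<le> real CARD('n) * B" .
  have "\<bar>(M *v e) $ j\<bar> \<le> norm (M *v e)"
    by (rule component_le_norm_cart)
  also have "\<dots> \<le> onorm (\<lambda>z. M *v z) * norm e"
    by (rule onorm) (rule matrix_vector_mul_bounded_linear)
  also have "\<dots> \<le> c * (real CARD('n) * B)"
    using assms(1) e \<open>0 \<le> c\<close> by (intro mult_mono) auto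
  finally show ?thesis
    by (simp add: mult.assoc)
qed

lemma residual_component_le:
  fixes M :: "real^'n::finite^'m::finite"
  assumes exact: "M *v \<phi> = \<psi>"
    and lifted_err: "\<bar>q - \<psi> $ j\<bar> \<le> \<epsilon>\<^sub>w"
    and bounded: "onorm (\<lambda>z. M *v z) \<le> c"
    and err: "\<And>k. \<bar>\<phi>' $ k - \<phi> $ k\<bar> \<le> \<epsilon>\<^sub>s"
  shows "\<bar>q - (M *v \<phi>') $ j\<bar> \<le> \<epsilon>\<^sub>w + c * real CARD('n) * \<epsilon>\<^sub>s"
proof -
  have "q - (M *v \<phi>') $ j = (q - \<psi> $ j) - (M *v (\<phi>' - \<phi>)) $ j"
    using exact by (simp add: matrix_vector_mult_diff_distrib)
  moreover have "\<bar>(M *v (\<phi>' - \<phi>)) $ j\<bar> \<le> c * real CARD('n) * \<epsilon>\<^sub>s"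
    using bounded err by (intro matrix_vector_mult_component_le) auto
  ultimately show ?thesis
    using lifted_err by linarith
qed

lemma norm2_le_sqrt_card_mult:
  fixes v :: "'c::finite \<times> nat \<Rightarrow> real"
  assumes "\<And>j l. l < n \<Longrightarrow> \<bar>v (j, l)\<bar> \<le> B"
  shows "norm2 n v \<le> sqrt (real CARD('c) * real n) * B"
proof (cases "n = 0")
  case True
  then show ?thesis by (simp add: norm2_def)
next
  case False
  then have "0 \<le> B"
    using assms[of 0] by fastforce
  have "(\<Sum>i\<in>UNIV \<times> {..<n}. (v i)^2) \<le> (\<Sum>i\<in>(UNIV::'c set) \<times> {..<n}. B^2)"
  proof (rule sum_mono)
    fix i :: "'c \<times> nat"
    assume "i \<in> UNIV \<times> {..<n}"
    then have "\<bar>v i\<bar> \<le> B"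
      using assms by auto
    then show "(v i)^2 \<le> B^2"
      by (metis abs_le_square_iff abs_of_nonneg \<open>0 \<le> B\<close>)
  qed
  also have "\<dots> = real CARD('c) * real n * B^2"
    by (simp add: card_cartesian_product)
  finally have "norm2 n v \<le> sqrt (real CARD('c) * real n * B^2)"
    unfolding norm2_def by (rule real_sqrt_le_mono)
  also have "\<dots> = sqrt (real CARD('c) * real n) * B"
    using \<open>0 \<le> B\<close> by (simp add: real_sqrt_mult)
  finally show ?thesis .
qed

lemma sqrt_mult_powr_neg:
  assumes "0 \<le> x"
  shows "sqrt x * x powr (-p) = x powr (1/2 - p)"
proof -
  have "x powr (1/2 - p) = x powr (1/2) * x powr (-p)"
    by (simp add: powr_add[symmetric])
  then show ?thesis
    using assms by (simp add: powr_half_sqrt)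
qed

lemma norm2_le_powr:
  fixes v :: "'c::finite \<times> nat \<Rightarrow> real"
  assumes "\<And>j l. l < n \<Longrightarrow> \<bar>v (j, l)\<bar> \<le> K * real n powr (-p)"
  shows "norm2 n v \<le> sqrt (real CARD('c)) * K * real n powr (1/2 - p)"
proof -
  have "norm2 n v \<le> sqrt (real CARD('c) * real n) * (K * real n powr (-p))"
    using assms by (rule norm2_le_sqrt_card_mult)
  also have "\<dots> = sqrt (real CARD('c)) * K * real n powr (1/2 - p)"
    using sqrt_mult_powr_neg[of "real n" p] by (simp add: real_sqrt_mult ac_simps)
  finally show ?thesis .
qed

lemma norm2_jacobian_residual_le:
  fixes J :: "real^'s::finite \<Rightarrow> real^'s^'w::finite" and q :: "'w \<times> nat \<Rightarrow> real"
  assumes exact: "\<And>l. l < n \<Longrightarrow> J (g l) *v \<phi> l = \<psi> l"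
    and bounded: "\<And>l. l < n \<Longrightarrow> onorm (\<lambda>z. J (g l) *v z) \<le> c"
    and lifted_err: "\<And>j l. l < n \<Longrightarrow> \<bar>q (j, l) - \<psi> l $ j\<bar> \<le> cw * real n powr (-p)"
    and err: "\<And>k l. l < n \<Longrightarrow> \<bar>\<phi>' (k, l) - \<phi> l $ k\<bar> \<le> cs * real n powr (-p)"
  shows "norm2 n (\<lambda>i. q i - mat_vec n (jac_disc n J (sample n g)) \<phi>' i)
           \<le> sqrt (real CARD('w)) * (cw + c * real CARD('s) * cs) * real n powr (1/2 - p)"
proof (rule norm2_le_powr)
  fix j l
  assume l: "l < n"
  have "\<bar>q (j, l) - (J (g l) *v (\<chi> k. \<phi>' (k, l))) $ j\<bar>
      \<le> cw * real n powr (-p) + c * real CARD('s) * (cs * real n powr (-p))"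
    by (rule residual_component_le[OF exact lifted_err bounded]) (simp_all add: l err)
  then show "\<bar>q (j, l) - mat_vec n (jac_disc n J (sample n g)) \<phi>' (j, l)\<bar>
      \<le> (cw + c * real CARD('s) * cs) * real n powr (-p)"
    unfolding mat_vec_jac_disc[OF l] vec_sample_node[OF l] by (simp add: algebra_simps)
qed

theorem lemma1:
  fixes \<Omega> :: "(real^'d::finite) set" and Tf :: real
    and s :: "real^'d \<Rightarrow> real \<Rightarrow> real^'s::finite"
    and Sj :: "'s \<Rightarrow> real set"
    and f :: "(real^'d \<Rightarrow> real^'s) \<Rightarrow> real^'d \<Rightarrow> real^'s"
    and W :: "(real^'w::finite) set"
    and T :: "real^'s \<Rightarrow> real^'w" and J :: "real^'s \<Rightarrow> real^'s^'w" and c :: real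
    and a h :: "(real^'d \<Rightarrow> real^'w) \<Rightarrow> real^'d \<Rightarrow> real^'w"
    and Td :: "real^'w \<Rightarrow> real^'s"
    and xg :: "nat \<Rightarrow> nat \<Rightarrow> real^'d"
    and fd :: "nat \<Rightarrow> ('s \<times> nat \<Rightarrow> real) \<Rightarrow> ('s \<times> nat \<Rightarrow> real)"
    and A :: "nat \<Rightarrow> ('w \<times> nat) \<Rightarrow> ('w \<times> nat) \<Rightarrow> real"
    and H :: "nat \<Rightarrow> ('w \<times> nat) \<Rightarrow> (('w \<times> nat) \<times> ('w \<times> nat)) \<Rightarrow> real"
    and p :: real
  assumes Tf_pos: "Tf > 0"
    and sol_in: "\<forall>x\<in>\<Omega>. \<forall>t\<in>{0..<Tf}. s x t \<in> prod_set Sj"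
    and pde: "\<forall>x\<in>\<Omega>. \<forall>t\<in>{0..<Tf}.
               ((\<lambda>\<tau>. s x \<tau>) has_vector_derivative f (\<lambda>y. s y t) x) (at t within {0..<Tf})"
    and lift: "quadratic_lifting \<Omega> Tf s (prod_set Sj) W T J c a h"
    and rev: "reverse_lifting (prod_set Sj) W T Td"
    and grid: "\<forall>n. \<forall>l<n. xg n l \<in> \<Omega>"
    and f_lip: "\<forall>n. lipschitz_disc n Sj (fd n)"
    and f_cons: "\<exists>cs>0. \<forall>n. \<forall>t\<in>{0..<Tf}. \<forall>j. \<forall>l<n.
        \<bar>fd n (sample n (\<lambda>l. s (xg n l) t)) (j, l) - f (\<lambda>y. s y t) (xg n l) $ j\<bar>
          \<le> cs * real n powr (-p)"
    and w_cons: "\<exists>cw>0. \<forall>n. \<forall>t\<in>{0..<Tf}. \<forall>j. \<forall>l<n.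
        (let wb = nodewise n T (sample n (\<lambda>l. s (xg n l) t)) in
         \<bar>mat_vec n (A n) wb (j, l) + mat_vec2 n (H n) (kron wb) (j, l)
           - (a (\<lambda>y. T (s y t)) (xg n l) + h (\<lambda>y. T (s y t)) (xg n l)) $ j\<bar>
          \<le> cw * real n powr (-p))"
  shows "\<exists>C. \<forall>n. \<forall>t\<in>{0..<Tf}.
    (let wb = nodewise n T (sample n (\<lambda>l. s (xg n l) t));
         sb = nodewise n Td wb in
     norm2 n (\<lambda>i. mat_vec n (A n) wb i + mat_vec2 n (H n) (kron wb) i
                  - mat_vec n (jac_disc n J sb) (fd n sb) i)
       \<le> C * real n powr (1/2 - p))"
proof -
  obtain cs cw where cs: "\<forall>n. \<forall>t\<in>{0..<Tf}. \<forall>j. \<forall>l<n.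
        \<bar>fd n (sample n (\<lambda>l. s (xg n l) t)) (j, l) - f (\<lambda>y. s y t) (xg n l) $ j\<bar>
          \<le> cs * real n powr (-p)"
    and cw: "\<forall>n. \<forall>t\<in>{0..<Tf}. \<forall>j. \<forall>l<n.
        \<bar>mat_vec n (A n) (nodewise n T (sample n (\<lambda>l. s (xg n l) t))) (j, l)
           + mat_vec2 n (H n) (kron (nodewise n T (sample n (\<lambda>l. s (xg n l) t)))) (j, l)
           - (a (\<lambda>y. T (s y t)) (xg n l) + h (\<lambda>y. T (s y t)) (xg n l)) $ j\<bar>
          \<le> cw * real n powr (-p)"
    using f_cons w_cons unfolding Let_def by blast
  have J_bounded: "\<forall>v\<in>prod_set Sj. onorm (\<lambda>z. J v *v z) \<le> c"
    using lift unfolding quadratic_lifting_def by blast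
  have Td_T: "\<forall>v\<in>prod_set Sj. Td (T v) = v"
    using rev unfolding reverse_lifting_def by blast
  have chain_rule: "J (s x t) *v f (\<lambda>y. s y t) x = a (\<lambda>y. T (s y t)) x + h (\<lambda>y. T (s y t)) x"
    if "x \<in> \<Omega>" "t \<in> {0..<Tf}" for x t
    by (rule quadratic_lifting_jacobian_rhs[OF lift Tf_pos that]) (use that sol_in pde in auto)
  show ?thesis
  proof (intro exI allI ballI)
    fix n t
    assume t: "t \<in> {0..<Tf}"
    let ?sb = "sample n (\<lambda>l. s (xg n l) t)"
    have sb: "nodewise n Td (nodewise n T ?sb) = ?sb"
      using Td_T sol_in grid t by (intro nodewise_left_inverse_sample) auto
    show "let wb = nodewise n T ?sb; sb = nodewise n Td wb in
        norm2 n (\<lambda>i. mat_vec n (A n) wb i + mat_vec2 n (H n) (kron wb) i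
                  - mat_vec n (jac_disc n J sb) (fd n sb) i)
          \<le> sqrt (real CARD('w)) * (cw + c * real CARD('s) * cs) * real n powr (1/2 - p)"
      unfolding Let_def sb
    proof (rule norm2_jacobian_residual_le[where \<phi> = "\<lambda>l. f (\<lambda>y. s y t) (xg n l)"])
      show "J (s (xg n l) t) *v f (\<lambda>y. s y t) (xg n l)
          = a (\<lambda>y. T (s y t)) (xg n l) + h (\<lambda>y. T (s y t)) (xg n l)" if "l < n" for l
        using chain_rule grid t that by blast
    qed (use cs cw J_bounded sol_in grid t in auto)
  qed
qed

end
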